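(* Let $(A^\bullet,[\cdot,\cdot],\mathrm{D},R,\rho_0)$ be a strongly anchored DGLA with bracket of degree $d$ over $R=C^\infty(M)$ for a smooth manifold $M$, such that $A^{-d-1}$ and $A^{-d-2}$ are finitely generated projective $C^\infty(M)$-modules, hence $A^{-d-1}\cong\Gamma(W)$ and $A^{-d-2}\cong\Gamma(V)$ for vector bundles $W,V\to M$ (so $\mathrm{D}:\Gamma(V)\to\Gamma(W)$). Define for $\phi,\psi\in\Gamma(W)$, $v\in\Gamma(V)$, $f\in C^\infty(M)$: $[\phi,\psi]_W:=[\mathrm{D}\phi,\psi]$, $\rho(\phi)[f]:=\rho_0(\mathrm{D}\phi)[f]$, $\langle\phi,\psi\rangle:=[\phi,\psi]$, $\rho_D(\phi)[v]:=[\mathrm{D}\phi,v]$. Then $\langle\cdot,\cdot\rangle$ is $C^\infty(M)$-bilinear if and only if $[\psi,f\phi]=f[\psi,\phi]$ for all $f\in C^\infty(M)$, $\psi,\phi\in\Gamma(W)$. If this holds and the induced symmetric bundle map $\langle\cdot,\cdot\rangle:W\otimes_MW\to V$ is non-degenerate and surjective, then $(W,V,[\cdot,\cdot]_W,\rho,\langle\cdot,\cdot\rangle,\mathrm{D}|_{\Gamma(V)},\rho_D)$ is a Vinogradov algebroid.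
   Context: A graded Leibniz–Loday algebra of degree $d$: graded vector space $A^\bullet$ with bracket $[A^k,A^l]\subset A^{k+l+d}$ and $[a,[b,c]]=[[a,b],c]+(-1)^{(|a|+d)(|b|+d)}[b,[a,c]]$; DGLA: additionally $\mathrm{D}:A^\bullet\to A^{\bullet+1}$, $\mathrm{D}^2=0$, $\mathrm{D}[a,b]=[\mathrm{D}a,b]+(-1)^{|a|+d}[a,\mathrm{D}b]$, and $[b,a]=-(-1)^{(|a|+d)(|b|+d)}[a,b]$. Strongly anchored over $R$ (each $A^k$ an $R$-module, $\rho_0:A^{-d}\to\mathrm{End}_{\mathbb{R}}(R)$): $[\phi,f\psi]=\rho_0(\phi)(f)\psi+f[\phi,\psi]$ for $\phi\in A^{-d}$; $\rho_0$ is $R$-linear; $\rho_0(\mathrm{D}(f\phi))=f\rho_0(\mathrm{D}\phi)$ for $\phi\in A^{-d-1}$; and $\mathrm{D}(fg\psi)+fg\mathrm{D}\psi=f\mathrm{D}(g\psi)+g\mathrm{D}(f\psi)$. A Vinogradov algebroid over $M$: vector bundles $W,V$; $\mathbb{R}$-bilinear bracket $[\cdot,\cdot]_W$ on $\Gamma(W)$; bundle map $\rho:W\to TM$; symmetric surjective non-degenerate bundle map $\langle\cdot,\cdot\rangle:W\otimes_MW\to V$; $\mathbb{R}$-linear $\mathrm{D}:\Gamma(V)\to\Gamma(W)$; $\mathbb{R}$-linear $\rho_D$ assigning to $\phi\in\Gamma(W)$ an $\mathbb{R}$-linear $\rho_D(\phi):\Gamma(V)\to\Gamma(V)$ with $\rho_D(\phi)(fv)=(\rho(\phi)f)v+f\rho_D(\phi)v$;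 with axioms $[\psi,[\phi_1,\phi_2]_W]_W=[[\psi,\phi_1]_W,\phi_2]_W+[\phi_1,[\psi,\phi_2]_W]_W$, $[\psi,\psi]_W=\tfrac12\mathrm{D}\langle\psi,\psi\rangle$, $\rho_D(\psi)\langle\phi,\phi\rangle=2\langle[\psi,\phi]_W,\phi\rangle$, $\mathrm{D}(fgv)+fg\mathrm{D}v=f\mathrm{D}(gv)+g\mathrm{D}(fv)$. *)

theory Defs
  imports Main "HOL.Real_Vector_Spaces"
begin

text \<open>Algebraic (Serre--Swan) rendering. The ring R = C-infinity(M) is modelled as an
abstract commutative real algebra 'r; sections of vector bundles are modelled as finitely
generated projective R-modules; bundle maps as R-linear maps of section modules; vector
fields (sections of TM) as real-linear derivations of R. The graded space A is modelled
inside an ambient abelian group 'a by subsets A k (the homogeneous elements of degree k).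
Real scalar multiplication is the one induced by R, i.e. smul (of_real c).\<close>

definition sgnx :: "int \<Rightarrow> 'a::ab_group_add \<Rightarrow> 'a" where
  "sgnx e x = (if even e then x else - x)"

definition module_on :: "('r::{comm_ring_1,real_algebra_1} \<Rightarrow> 'a::ab_group_add \<Rightarrow> 'a) \<Rightarrow> 'a set \<Rightarrow> bool" where
  "module_on smul S \<longleftrightarrow>
     0 \<in> S \<and> (\<forall>x\<in>S. \<forall>y\<in>S. x + y \<in> S) \<and> (\<forall>x\<in>S. - x \<in> S) \<and>
     (\<forall>f. \<forall>x\<in>S. smul f x \<in> S) \<and>
     (\<forall>f g. \<forall>x\<in>S. smul (f + g) x = smul f x + smul g x) \<and>
     (\<forall>f. \<forall>x\<in>S. \<forall>y\<in>S. smul f (x + y) = smul f x + smul f y) \<and>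
     (\<forall>f g. \<forall>x\<in>S. smul (f * g) x = smul f (smul g x)) \<and>
     (\<forall>x\<in>S. smul 1 x = x)"

text \<open>Finitely generated projective: a direct summand of R^n.\<close>
definition fgp_module :: "('r::{comm_ring_1,real_algebra_1} \<Rightarrow> 'a::ab_group_add \<Rightarrow> 'a) \<Rightarrow> 'a set \<Rightarrow> bool" where
  "fgp_module smul S \<longleftrightarrow> module_on smul S \<and>
     (\<exists>(n::nat) (i::'a \<Rightarrow> nat \<Rightarrow> 'r) (p::(nat \<Rightarrow> 'r) \<Rightarrow> 'a).
        (\<forall>x\<in>S. \<forall>j\<ge>n. i x j = 0) \<and>
        (\<forall>x\<in>S. \<forall>y\<in>S. i (x + y) = (\<lambda>j. i x j + i y j)) \<and>
        (\<forall>f. \<forall>x\<in>S. i (smul f x) = (\<lambda>j. f * i x j)) \<and>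
        (\<forall>u. (\<forall>j\<ge>n. u j = 0) \<longrightarrow> p u \<in> S) \<and>
        (\<forall>u v. (\<forall>j\<ge>n. u j = 0) \<longrightarrow> (\<forall>j\<ge>n. v j = 0) \<longrightarrow> p (\<lambda>j. u j + v j) = p u + p v) \<and>
        (\<forall>f u. (\<forall>j\<ge>n. u j = 0) \<longrightarrow> p (\<lambda>j. f * u j) = smul f (p u)) \<and>
        (\<forall>x\<in>S. p (i x) = x))"

definition graded_module :: "('r::{comm_ring_1,real_algebra_1} \<Rightarrow> 'a::ab_group_add \<Rightarrow> 'a) \<Rightarrow> (int \<Rightarrow> 'a set) \<Rightarrow> bool" where
  "graded_module smul A \<longleftrightarrow> (\<forall>k. module_on smul (A k)) \<and> (\<forall>k l. k \<noteq> l \<longrightarrow> A k \<inter> A l \<subseteq> {0})"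

definition real_linear_on :: "('r::{comm_ring_1,real_algebra_1} \<Rightarrow> 'a::ab_group_add \<Rightarrow> 'a) \<Rightarrow> 'a set \<Rightarrow> ('a \<Rightarrow> 'a) \<Rightarrow> bool" where
  "real_linear_on smul S g \<longleftrightarrow>
     (\<forall>x\<in>S. \<forall>y\<in>S. g (x + y) = g x + g y) \<and>
     (\<forall>c::real. \<forall>x\<in>S. g (smul (of_real c) x) = smul (of_real c) (g x))"

definition real_bilinear_on :: "('r::{comm_ring_1,real_algebra_1} \<Rightarrow> 'a::ab_group_add \<Rightarrow> 'a) \<Rightarrow> 'a set \<Rightarrow> 'a set \<Rightarrow> ('a \<Rightarrow> 'a \<Rightarrow> 'a) \<Rightarrow> bool" where
  "real_bilinear_on smul S T b \<longleftrightarrow>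
     (\<forall>y\<in>T. real_linear_on smul S (\<lambda>x. b x y)) \<and> (\<forall>x\<in>S. real_linear_on smul T (\<lambda>y. b x y))"

definition graded_LL :: "('r::{comm_ring_1,real_algebra_1} \<Rightarrow> 'a::ab_group_add \<Rightarrow> 'a) \<Rightarrow> (int \<Rightarrow> 'a set) \<Rightarrow> int \<Rightarrow> ('a \<Rightarrow> 'a \<Rightarrow> 'a) \<Rightarrow> bool" where
  "graded_LL smul A d br \<longleftrightarrow> graded_module smul A \<and>
     (\<forall>k l. \<forall>a\<in>A k. \<forall>b\<in>A l. br a b \<in> A (k + l + d)) \<and>
     (\<forall>k l. real_bilinear_on smul (A k) (A l) br) \<and>
     (\<forall>k l m. \<forall>a\<in>A k. \<forall>b\<in>A l. \<forall>c\<in>A m.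
        br a (br b c) = br (br a b) c + sgnx ((k + d) * (l + d)) (br b (br a c)))"

definition DGLA :: "('r::{comm_ring_1,real_algebra_1} \<Rightarrow> 'a::ab_group_add \<Rightarrow> 'a) \<Rightarrow> (int \<Rightarrow> 'a set) \<Rightarrow> int \<Rightarrow> ('a \<Rightarrow> 'a \<Rightarrow> 'a) \<Rightarrow> ('a \<Rightarrow> 'a) \<Rightarrow> bool" where
  "DGLA smul A d br D \<longleftrightarrow> graded_LL smul A d br \<and>
     (\<forall>k. \<forall>a\<in>A k. D a \<in> A (k + 1)) \<and>
     (\<forall>k. real_linear_on smul (A k) D) \<and>
     (\<forall>k. \<forall>a\<in>A k. D (D a) = 0) \<and>
     (\<forall>k l. \<forall>a\<in>A k. \<forall>b\<in>A l. D (br a b) = br (D a) b + sgnx (k + d) (br a (D b))) \<and>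
     (\<forall>k l. \<forall>a\<in>A k. \<forall>b\<in>A l. br b a = - sgnx ((k + d) * (l + d)) (br a b))"

definition strongly_anchored :: "('r::{comm_ring_1,real_algebra_1} \<Rightarrow> 'a::ab_group_add \<Rightarrow> 'a) \<Rightarrow> (int \<Rightarrow> 'a set) \<Rightarrow> int \<Rightarrow> ('a \<Rightarrow> 'a \<Rightarrow> 'a) \<Rightarrow> ('a \<Rightarrow> 'a) \<Rightarrow> ('a \<Rightarrow> 'r \<Rightarrow> 'r) \<Rightarrow> bool" where
  "strongly_anchored smul A d br D rho0 \<longleftrightarrow>
     \<comment> \<open>rho0 takes values in real-linear endomorphisms of R\<close>
     (\<forall>\<phi>\<in>A (-d). (\<forall>f g. rho0 \<phi> (f + g) = rho0 \<phi> f + rho0 \<phi> g) \<and>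
                  (\<forall>(c::real) f. rho0 \<phi> (of_real c * f) = of_real c * rho0 \<phi> f)) \<and>
     \<comment> \<open>rho0 is R-linear\<close>
     (\<forall>\<phi>\<in>A (-d). \<forall>\<psi>\<in>A (-d). rho0 (\<phi> + \<psi>) = (\<lambda>f. rho0 \<phi> f + rho0 \<psi> f)) \<and>
     (\<forall>g. \<forall>\<phi>\<in>A (-d). rho0 (smul g \<phi>) = (\<lambda>f. g * rho0 \<phi> f)) \<and>
     \<comment> \<open>anchor identity\<close>
     (\<forall>\<phi>\<in>A (-d). \<forall>k. \<forall>\<psi>\<in>A k. \<forall>f. br \<phi> (smul f \<psi>) = smul (rho0 \<phi> f) \<psi> + smul f (br \<phi> \<psi>)) \<and>
     (\<forall>\<phi>\<in>A (-d-1). \<forall>f. rho0 (D (smul f \<phi>)) = (\<lambda>g. f * rho0 (D \<phi>) g)) \<and>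
     (\<forall>k. \<forall>\<psi>\<in>A k. \<forall>f g. D (smul (f * g) \<psi>) + smul (f * g) (D \<psi>) = smul f (D (smul g \<psi>)) + smul g (D (smul f \<psi>)))"

definition R_bilinear_on :: "('r::{comm_ring_1,real_algebra_1} \<Rightarrow> 'a::ab_group_add \<Rightarrow> 'a) \<Rightarrow> 'a set \<Rightarrow> 'a set \<Rightarrow> ('a \<Rightarrow> 'a \<Rightarrow> 'a) \<Rightarrow> bool" where
  "R_bilinear_on smul W V p \<longleftrightarrow>
     (\<forall>x\<in>W. \<forall>y\<in>W. p x y \<in> V) \<and>
     (\<forall>x\<in>W. \<forall>x'\<in>W. \<forall>y\<in>W. p (x + x') y = p x y + p x' y) \<and>
     (\<forall>x\<in>W. \<forall>y\<in>W. \<forall>y'\<in>W. p x (y + y') = p x y + p x y') \<and>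
     (\<forall>f. \<forall>x\<in>W. \<forall>y\<in>W. p (smul f x) y = smul f (p x y)) \<and>
     (\<forall>f. \<forall>x\<in>W. \<forall>y\<in>W. p x (smul f y) = smul f (p x y))"

definition R_linear_map :: "('r::{comm_ring_1,real_algebra_1} \<Rightarrow> 'a::ab_group_add \<Rightarrow> 'a) \<Rightarrow> 'a set \<Rightarrow> 'a set \<Rightarrow> ('a \<Rightarrow> 'a) \<Rightarrow> bool" where
  "R_linear_map smul W V h \<longleftrightarrow> (\<forall>x\<in>W. h x \<in> V) \<and>
     (\<forall>x\<in>W. \<forall>y\<in>W. h (x + y) = h x + h y) \<and> (\<forall>f. \<forall>x\<in>W. h (smul f x) = smul f (h x))"

text \<open>Fibrewise surjectivity of the bundle map, in terms of sections: every section of V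
is a finite sum of pairings.\<close>
definition surjective_pairing :: "('a::ab_group_add \<Rightarrow> 'a \<Rightarrow> 'a) \<Rightarrow> 'a set \<Rightarrow> 'a set \<Rightarrow> bool" where
  "surjective_pairing p W V \<longleftrightarrow>
     (\<forall>v\<in>V. \<exists>(n::nat) xs ys. (\<forall>i<n. xs i \<in> W \<and> ys i \<in> W) \<and> v = (\<Sum>i<n. p (xs i) (ys i)))"

text \<open>Fibrewise non-degeneracy (W -> Hom(W,V) fibrewise injective), in terms of sections:
the induced R-linear map Gamma(W) -> Hom_R(Gamma(W),Gamma(V)) has an R-linear left inverse.\<close>
definition nondegenerate_pairing :: "('r::{comm_ring_1,real_algebra_1} \<Rightarrow> 'a::ab_group_add \<Rightarrow> 'a) \<Rightarrow> ('a \<Rightarrow> 'a \<Rightarrow> 'a) \<Rightarrow> 'a set \<Rightarrow> 'a set \<Rightarrow> bool" where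
  "nondegenerate_pairing smul p W V \<longleftrightarrow>
     (\<exists>L :: ('a \<Rightarrow> 'a) \<Rightarrow> 'a.
        (\<forall>h. R_linear_map smul W V h \<longrightarrow> L h \<in> W) \<and>
        (\<forall>h h'. (\<forall>x\<in>W. h x = h' x) \<longrightarrow> L h = L h') \<and>
        (\<forall>h h'. R_linear_map smul W V h \<longrightarrow> R_linear_map smul W V h' \<longrightarrow> L (\<lambda>x. h x + h' x) = L h + L h') \<and>
        (\<forall>f h. R_linear_map smul W V h \<longrightarrow> L (\<lambda>x. smul f (h x)) = smul f (L h)) \<and>
        (\<forall>\<phi>\<in>W. L (p \<phi>) = \<phi>))"

definition is_derivation :: "('r::{comm_ring_1,real_algebra_1} \<Rightarrow> 'r) \<Rightarrow> bool" where
  "is_derivation X \<longleftrightarrow> (\<forall>f g. X (f + g) = X f + X g) \<and> (\<forall>(c::real) f. X (of_real c * f) = of_real c * X f) \<and>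
     (\<forall>f g. X (f * g) = f * X g + X f * g)"

definition vinogradov_algebroid ::
  "('r::{comm_ring_1,real_algebra_1} \<Rightarrow> 'a::ab_group_add \<Rightarrow> 'a) \<Rightarrow> 'a set \<Rightarrow> 'a set \<Rightarrow> ('a \<Rightarrow> 'a \<Rightarrow> 'a) \<Rightarrow> ('a \<Rightarrow> 'r \<Rightarrow> 'r)
    \<Rightarrow> ('a \<Rightarrow> 'a \<Rightarrow> 'a) \<Rightarrow> ('a \<Rightarrow> 'a) \<Rightarrow> ('a \<Rightarrow> 'a \<Rightarrow> 'a) \<Rightarrow> bool" where
  "vinogradov_algebroid smul W V brW rho pair Dv rhoD \<longleftrightarrow>
     \<comment> \<open>W, V vector bundles\<close>
     fgp_module smul W \<and> fgp_module smul V \<and>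
     \<comment> \<open>real-bilinear bracket on sections of W\<close>
     (\<forall>x\<in>W. \<forall>y\<in>W. brW x y \<in> W) \<and> real_bilinear_on smul W W brW \<and>
     \<comment> \<open>anchor: bundle map W -> TM\<close>
     (\<forall>\<phi>\<in>W. is_derivation (rho \<phi>)) \<and>
     (\<forall>\<phi>\<in>W. \<forall>\<psi>\<in>W. rho (\<phi> + \<psi>) = (\<lambda>f. rho \<phi> f + rho \<psi> f)) \<and>
     (\<forall>g. \<forall>\<phi>\<in>W. rho (smul g \<phi>) = (\<lambda>f. g * rho \<phi> f)) \<and>
     \<comment> \<open>symmetric surjective non-degenerate bundle map W (x) W -> V\<close>
     R_bilinear_on smul W V pair \<and> (\<forall>x\<in>W. \<forall>y\<in>W. pair x y = pair y x) \<and>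
     surjective_pairing pair W V \<and> nondegenerate_pairing smul pair W V \<and>
     \<comment> \<open>D : Gamma(V) -> Gamma(W) real-linear\<close>
     (\<forall>v\<in>V. Dv v \<in> W) \<and> real_linear_on smul V Dv \<and>
     \<comment> \<open>rho_D\<close>
     (\<forall>\<phi>\<in>W. \<forall>v\<in>V. rhoD \<phi> v \<in> V) \<and> (\<forall>\<phi>\<in>W. real_linear_on smul V (rhoD \<phi>)) \<and>
     (\<forall>\<phi>\<in>W. \<forall>\<phi>'\<in>W. \<forall>v\<in>V. rhoD (\<phi> + \<phi>') v = rhoD \<phi> v + rhoD \<phi>' v) \<and>
     (\<forall>(c::real). \<forall>\<phi>\<in>W. \<forall>v\<in>V. rhoD (smul (of_real c) \<phi>) v = smul (of_real c) (rhoD \<phi> v)) \<and>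
     (\<forall>\<phi>\<in>W. \<forall>f. \<forall>v\<in>V. rhoD \<phi> (smul f v) = smul (rho \<phi> f) v + smul f (rhoD \<phi> v)) \<and>
     \<comment> \<open>axioms\<close>
     (\<forall>\<psi>\<in>W. \<forall>\<phi>1\<in>W. \<forall>\<phi>2\<in>W. brW \<psi> (brW \<phi>1 \<phi>2) = brW (brW \<psi> \<phi>1) \<phi>2 + brW \<phi>1 (brW \<psi> \<phi>2)) \<and>
     (\<forall>\<psi>\<in>W. brW \<psi> \<psi> = smul (of_real (1/2)) (Dv (pair \<psi> \<psi>))) \<and>
     (\<forall>\<psi>\<in>W. \<forall>\<phi>\<in>W. rhoD \<psi> (pair \<phi> \<phi>) = smul 2 (pair (brW \<psi> \<phi>) \<phi>)) \<and>
     (\<forall>f g. \<forall>v\<in>V. Dv (smul (f * g) v) + smul (f * g) (Dv v) = smul f (Dv (smul g v)) + smul g (Dv (smul f v)))"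

end

theory Submission
  imports Defs
begin

(* On W = A^{-d-1} the shifted degree k + d is odd and on A^{-d} it is zero, so graded
   skew-symmetry makes the bracket symmetric on W, and with D o D = 0 the Jacobi and derivation
   identities lose their signs: they become the Leibniz identity of [phi,psi]_W = [D phi,psi],
   the identity [psi,psi]_W = 1/2 D<psi,psi> and the invariance of the pairing. Symmetry also
   turns right R-linearity of the pairing into R-bilinearity.
   The one non-formal point is that rho(phi) = rho0(D phi) is a derivation. The anchor identity
   only shows that its Leibniz defect annihilates every A^k; but the defect is R-linear in phi,
   and expanding phi in a finite generating family of the projective module W writes it as a
   sum of coordinates of such annihilated products, hence zero. *)

lemma
  fixes smul :: "'r::{comm_ring_1,real_algebra_1} \<Rightarrow> 'a::ab_group_add \<Rightarrow> 'a"
  assumes "module_on smul S"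
  shows module_on_zero: "0 \<in> S"
    and module_on_add: "x \<in> S \<Longrightarrow> y \<in> S \<Longrightarrow> x + y \<in> S"
    and module_on_smul: "x \<in> S \<Longrightarrow> smul f x \<in> S"
    and module_on_smul_add_left: "x \<in> S \<Longrightarrow> smul (f + g) x = smul f x + smul g x"
    and module_on_smul_add_right: "x \<in> S \<Longrightarrow> y \<in> S \<Longrightarrow> smul f (x + y) = smul f x + smul f y"
    and module_on_smul_mult: "x \<in> S \<Longrightarrow> smul (f * g) x = smul f (smul g x)"
    and module_on_smul_one: "x \<in> S \<Longrightarrow> smul 1 x = x"
  using assms unfolding module_on_def by blast+

lemma module_on_smul_zero_left:
  assumes "module_on smul S" "x \<in> S"
  shows "smul 0 x = 0"
  using module_on_smul_add_left[OF assms, of 0 0] by simp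

lemma module_on_smul_diff_left:
  assumes "module_on smul S" "x \<in> S"
  shows "smul (f - g) x = smul f x - smul g x"
  using module_on_smul_add_left[OF assms, of "f - g" g] by (simp add: algebra_simps)

lemma module_on_smul_two:
  assumes "module_on smul S" "x \<in> S"
  shows "smul 2 x = x + x"
  using module_on_smul_add_left[OF assms, of 1 1] module_on_smul_one[OF assms] by (simp add: one_add_one)

lemma module_on_sum_mem:
  assumes "module_on smul S" "finite J" "\<And>j. j \<in> J \<Longrightarrow> x j \<in> S"
  shows "(\<Sum>j\<in>J. x j) \<in> S"
  using assms(2,3) by (induction J rule: finite_induct) (auto intro: module_on_zero module_on_add assms(1))

lemma additive_on_sum:
  fixes F :: "'a::ab_group_add \<Rightarrow> 'b::ab_group_add"
  assumes S: "module_on smul S"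
    and F_add: "\<And>x y. x \<in> S \<Longrightarrow> y \<in> S \<Longrightarrow> F (x + y) = F x + F y"
    and "finite J" "\<And>j. j \<in> J \<Longrightarrow> x j \<in> S"
  shows "F (\<Sum>j\<in>J. x j) = (\<Sum>j\<in>J. F (x j))"
  using assms(3,4)
proof (induction J rule: finite_induct)
  case empty
  have "F (0 + 0) = F 0 + F 0" using F_add module_on_zero[OF S] by blast
  then show ?case by simp
next
  case (insert j J)
  have "(\<Sum>k\<in>J. x k) \<in> S" using module_on_sum_mem[OF S] insert by blast
  then show ?case using F_add insert by simp
qed

lemma linear_image_truncated_vector:
  fixes smul :: "'r::{comm_ring_1,real_algebra_1} \<Rightarrow> 'a::ab_group_add \<Rightarrow> 'a"
    and p :: "(nat \<Rightarrow> 'r) \<Rightarrow> 'a"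
  assumes p_add: "\<And>u v. \<forall>j\<ge>n. u j = 0 \<Longrightarrow> \<forall>j\<ge>n. v j = 0 \<Longrightarrow> p (\<lambda>j. u j + v j) = p u + p v"
    and p_smul: "\<And>f u. \<forall>j\<ge>n. u j = 0 \<Longrightarrow> p (\<lambda>j. f * u j) = smul f (p u)"
    and "m \<le> n"
  shows "p (\<lambda>j. if j < m then u j else 0) = (\<Sum>j<m. smul (u j) (p (\<lambda>k. if k = j then 1 else 0)))"
  using assms(3)
proof (induction m)
  case 0
  have "p (\<lambda>j. 0 + 0) = p (\<lambda>j. 0) + p (\<lambda>j. 0)" by (rule p_add) auto
  then show ?case by simp
next
  case (Suc m)
  have split: "(\<lambda>j. if j < Suc m then u j else 0) =
      (\<lambda>j. (if j < m then u j else 0) + u m * (if j = m then 1 else 0))"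
    by (auto simp: less_Suc_eq)
  have "p (\<lambda>j. (if j < m then u j else 0) + u m * (if j = m then 1 else 0)) =
      p (\<lambda>j. if j < m then u j else 0) + p (\<lambda>j. u m * (if j = m then 1 else 0))"
    by (rule p_add) (use Suc.prems in auto)
  also have "p (\<lambda>j. u m * (if j = m then 1 else 0)) = smul (u m) (p (\<lambda>k. if k = m then 1 else 0))"
    by (rule p_smul) (use Suc.prems in auto)
  finally show ?case using split Suc by simp
qed

lemma fgp_module_expansion:
  fixes smul :: "'r::{comm_ring_1,real_algebra_1} \<Rightarrow> 'a::ab_group_add \<Rightarrow> 'a"
  assumes "fgp_module smul S"
  obtains n :: nat and w :: "nat \<Rightarrow> 'a" and i :: "'a \<Rightarrow> nat \<Rightarrow> 'r"
  where "\<And>j. j < n \<Longrightarrow> w j \<in> S"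
    and "\<And>f x. x \<in> S \<Longrightarrow> i (smul f x) = (\<lambda>j. f * i x j)"
    and "\<And>x. x \<in> S \<Longrightarrow> x = (\<Sum>j<n. smul (i x j) (w j))"
proof -
  obtain n :: nat and i :: "'a \<Rightarrow> nat \<Rightarrow> 'r" and p where
    i_bound: "\<forall>x\<in>S. \<forall>j\<ge>n. i x j = (0::'r)" and
    i_smul: "\<forall>f. \<forall>x\<in>S. i (smul f x) = (\<lambda>j. f * i x j)" and
    p_mem: "\<forall>u. (\<forall>j\<ge>n. u j = 0) \<longrightarrow> p u \<in> S" and
    p_add: "\<forall>u v. (\<forall>j\<ge>n. u j = 0) \<longrightarrow> (\<forall>j\<ge>n. v j = 0) \<longrightarrow> p (\<lambda>j. u j + v j) = p u + p v" and
    p_smul: "\<forall>f u. (\<forall>j\<ge>n. u j = 0) \<longrightarrow> p (\<lambda>j. f * u j) = smul f (p u)" and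
    p_i: "\<forall>x\<in>S. p (i x) = x"
    using assms unfolding fgp_module_def by (elim exE conjE) (rule that)
  define w where "w j = p (\<lambda>k. if k = j then 1 else 0)" for j
  show thesis
  proof
    show "w j \<in> S" if "j < n" for j
      unfolding w_def using p_mem that by auto
    show "i (smul f x) = (\<lambda>j. f * i x j)" if "x \<in> S" for f x
      using i_smul that by blast
    show "x = (\<Sum>j<n. smul (i x j) (w j))" if x: "x \<in> S" for x
    proof -
      have "(\<lambda>j. if j < n then i x j else 0) = i x"
        using i_bound x by (auto simp: not_less)
      then have "p (i x) = (\<Sum>j<n. smul (i x j) (w j))"
        unfolding w_def using linear_image_truncated_vector[of n p smul n "i x"] p_add p_smul by simp
      then show ?thesis using p_i x by simp
    qed
  qed
qed

lemma fgp_module_annihilating_functional_zero: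
  fixes smul :: "'r::{comm_ring_1,real_algebra_1} \<Rightarrow> 'a::ab_group_add \<Rightarrow> 'a"
    and F :: "'a \<Rightarrow> 'r"
  assumes S: "fgp_module smul S"
    and F_add: "\<And>x y. x \<in> S \<Longrightarrow> y \<in> S \<Longrightarrow> F (x + y) = F x + F y"
    and F_smul: "\<And>f x. x \<in> S \<Longrightarrow> F (smul f x) = f * F x"
    and F_annihilates: "\<And>x y. x \<in> S \<Longrightarrow> y \<in> S \<Longrightarrow> smul (F x) y = 0"
    and x: "x \<in> S"
  shows "F x = 0"
proof -
  have M: "module_on smul S" using S unfolding fgp_module_def by blast
  obtain n :: nat and w i where w: "\<And>j. j < n \<Longrightarrow> w j \<in> S"
    and i_smul: "\<And>f x. x \<in> S \<Longrightarrow> i (smul f x) = (\<lambda>j. f * i x j)"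
    and expansion: "\<And>x. x \<in> S \<Longrightarrow> x = (\<Sum>j<n. smul (i x j) (w j))"
    using fgp_module_expansion[OF S] by blast
  have i_zero: "i 0 = (\<lambda>j. 0)"
    using i_smul[OF module_on_zero[OF M], of 0] module_on_smul_zero_left[OF M module_on_zero[OF M]]
    by simp
  have "F x = F (\<Sum>j<n. smul (i x j) (w j))"
    using expansion[OF x] by (rule arg_cong)
  also have "\<dots> = (\<Sum>j<n. F (smul (i x j) (w j)))"
    by (rule additive_on_sum[OF M F_add]) (auto intro: module_on_smul[OF M] w)
  also have "\<dots> = (\<Sum>j<n. i (smul (F (w j)) x) j)"
    using F_smul w i_smul[OF x] by (simp add: mult.commute)
  also have "\<dots> = 0"
    using F_annihilates w x i_zero by simp
  finally show ?thesis .
qed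

lemma of_real_half_times_two: "(of_real (1/2) :: 'r::real_algebra_1) * 2 = 1"
proof -
  have "(of_real (1/2) :: 'r) * 2 = of_real (1/2 * 2)" by (simp only: of_real_mult of_real_numeral)
  then show ?thesis by simp
qed

lemma real_bilinear_on_compose_left:
  assumes g: "real_linear_on smul S g" and g_mem: "\<And>x. x \<in> S \<Longrightarrow> g x \<in> S'"
    and b: "real_bilinear_on smul S' T b"
  shows "real_bilinear_on smul S T (\<lambda>x y. b (g x) y)"
  using assms unfolding real_bilinear_on_def real_linear_on_def by simp

locale strongly_anchored_DGLA =
  fixes smul :: "'r::{comm_ring_1,real_algebra_1} \<Rightarrow> 'a::ab_group_add \<Rightarrow> 'a"
    and A :: "int \<Rightarrow> 'a set" and d :: int and br :: "'a \<Rightarrow> 'a \<Rightarrow> 'a"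
    and D :: "'a \<Rightarrow> 'a" and rho0 :: "'a \<Rightarrow> 'r \<Rightarrow> 'r"
  assumes DGLA: "DGLA smul A d br D"
    and anchored: "strongly_anchored smul A d br D rho0"
begin

lemma module: "module_on smul (A k)"
  using DGLA unfolding DGLA_def graded_LL_def graded_module_def by meson

lemmas
  zero_mem = module_on_zero[OF module] and
  smul_mem = module_on_smul[OF module] and
  smul_add_right = module_on_smul_add_right[OF module] and
  smul_mult = module_on_smul_mult[OF module] and
  smul_one = module_on_smul_one[OF module] and
  smul_diff_left = module_on_smul_diff_left[OF module] and
  smul_two = module_on_smul_two[OF module]

lemma br_mem: "a \<in> A k \<Longrightarrow> b \<in> A l \<Longrightarrow> br a b \<in> A (k + l + d)"
  using DGLA unfolding DGLA_def graded_LL_def by meson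

lemma br_real_bilinear: "real_bilinear_on smul (A k) (A l) br"
  using DGLA unfolding DGLA_def graded_LL_def by meson

lemma br_jacobi:
  "a \<in> A k \<Longrightarrow> b \<in> A l \<Longrightarrow> c \<in> A m \<Longrightarrow>
    br a (br b c) = br (br a b) c + sgnx ((k + d) * (l + d)) (br b (br a c))"
  using DGLA unfolding DGLA_def graded_LL_def by meson

lemma D_mem: "a \<in> A k \<Longrightarrow> D a \<in> A (k + 1)"
  using DGLA unfolding DGLA_def by meson

lemma D_real_linear: "real_linear_on smul (A k) D"
  using DGLA unfolding DGLA_def by meson

lemma D_add: "x \<in> A k \<Longrightarrow> y \<in> A k \<Longrightarrow> D (x + y) = D x + D y"
  using D_real_linear unfolding real_linear_on_def by blast

lemma D_D: "a \<in> A k \<Longrightarrow> D (D a) = 0"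
  using DGLA unfolding DGLA_def by meson

lemma D_br: "a \<in> A k \<Longrightarrow> b \<in> A l \<Longrightarrow> D (br a b) = br (D a) b + sgnx (k + d) (br a (D b))"
  using DGLA unfolding DGLA_def by meson

lemma br_skew: "a \<in> A k \<Longrightarrow> b \<in> A l \<Longrightarrow> br b a = - sgnx ((k + d) * (l + d)) (br a b)"
  using DGLA unfolding DGLA_def by meson

lemma br_add_left: "a \<in> A k \<Longrightarrow> a' \<in> A k \<Longrightarrow> b \<in> A l \<Longrightarrow> br (a + a') b = br a b + br a' b"
  using br_real_bilinear unfolding real_bilinear_on_def real_linear_on_def by blast

lemma br_add_right: "a \<in> A k \<Longrightarrow> b \<in> A l \<Longrightarrow> b' \<in> A l \<Longrightarrow> br a (b + b') = br a b + br a b'"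
  using br_real_bilinear unfolding real_bilinear_on_def real_linear_on_def by blast

lemma br_zero_left: "b \<in> A l \<Longrightarrow> br 0 b = 0"
  using br_add_left[OF zero_mem zero_mem] by (metis add_cancel_right_left add_0)

lemma rho0_real_linear:
  "X \<in> A (-d) \<Longrightarrow> rho0 X (f + g) = rho0 X f + rho0 X g"
  "X \<in> A (-d) \<Longrightarrow> rho0 X (of_real c * f) = of_real c * rho0 X f"
  using anchored unfolding strongly_anchored_def by meson+

lemma rho0_add: "X \<in> A (-d) \<Longrightarrow> Y \<in> A (-d) \<Longrightarrow> rho0 (X + Y) = (\<lambda>f. rho0 X f + rho0 Y f)"
  using anchored unfolding strongly_anchored_def by meson

lemma anchor: "X \<in> A (-d) \<Longrightarrow> \<psi> \<in> A k \<Longrightarrow> br X (smul f \<psi>) = smul (rho0 X f) \<psi> + smul f (br X \<psi>)"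
  using anchored unfolding strongly_anchored_def by meson

lemma rho0_D_smul: "\<phi> \<in> A (-d-1) \<Longrightarrow> rho0 (D (smul f \<phi>)) = (\<lambda>g. f * rho0 (D \<phi>) g)"
  using anchored unfolding strongly_anchored_def by meson

lemma D_smul_mult:
  "\<psi> \<in> A k \<Longrightarrow> D (smul (f * g) \<psi>) + smul (f * g) (D \<psi>) = smul f (D (smul g \<psi>)) + smul g (D (smul f \<psi>))"
  using anchored unfolding strongly_anchored_def by meson

abbreviation W where "W \<equiv> A (-d-1)"
abbreviation V where "V \<equiv> A (-d-2)"

lemma D_mem_W: "\<phi> \<in> W \<Longrightarrow> D \<phi> \<in> A (-d)"
  using D_mem[of \<phi> "-d-1"] by simp

lemma D_mem_V: "v \<in> V \<Longrightarrow> D v \<in> W"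
  using D_mem[of v "-d-2"] by (metis add_diff_eq diff_add_cancel diff_diff_eq one_add_one)

lemma br_mem_W: "\<phi> \<in> W \<Longrightarrow> \<psi> \<in> W \<Longrightarrow> br \<phi> \<psi> \<in> V"
  using br_mem[of \<phi> "-d-1" \<psi> "-d-1"] by (simp add: algebra_simps)

lemma br_mem_degree_preserving: "X \<in> A (-d) \<Longrightarrow> \<psi> \<in> A k \<Longrightarrow> br X \<psi> \<in> A k"
  using br_mem[of X "-d" \<psi> k] by simp

lemma br_W_sym: "\<phi> \<in> W \<Longrightarrow> \<psi> \<in> W \<Longrightarrow> br \<phi> \<psi> = br \<psi> \<phi>"
  using br_skew[of \<psi> "-d-1" \<phi> "-d-1"] by (simp add: sgnx_def)

lemma R_bilinear_on_W_iff_right_linear: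
  "R_bilinear_on smul W V br \<longleftrightarrow> (\<forall>f. \<forall>\<psi>\<in>W. \<forall>\<phi>\<in>W. br \<psi> (smul f \<phi>) = smul f (br \<psi> \<phi>))"
proof
  assume right_linear: "\<forall>f. \<forall>\<psi>\<in>W. \<forall>\<phi>\<in>W. br \<psi> (smul f \<phi>) = smul f (br \<psi> \<phi>)"
  have "br (smul f \<phi>) \<psi> = smul f (br \<phi> \<psi>)" if "\<phi> \<in> W" "\<psi> \<in> W" for f \<phi> \<psi>
    using right_linear br_W_sym smul_mem that by metis
  then show "R_bilinear_on smul W V br"
    unfolding R_bilinear_on_def using br_mem_W br_add_left br_add_right right_linear by blast
qed (simp add: R_bilinear_on_def)

lemma anchor_Leibniz_defect_annihilates:
  assumes X: "X \<in> A (-d)" and \<psi>: "\<psi> \<in> A k"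
  shows "smul (rho0 X (f * g) - f * rho0 X g - rho0 X f * g) \<psi> = 0"
proof -
  have X\<psi>: "br X \<psi> \<in> A k" using br_mem_degree_preserving X \<psi> .
  have "smul (rho0 X (f * g)) \<psi> + smul (f * g) (br X \<psi>) = br X (smul f (smul g \<psi>))"
    using anchor[OF X \<psi>, of "f * g"] smul_mult[OF \<psi>, of f g] by simp
  also have "\<dots> = smul (rho0 X f) (smul g \<psi>) + smul f (smul (rho0 X g) \<psi> + smul g (br X \<psi>))"
    using anchor[OF X smul_mem[OF \<psi>]] anchor[OF X \<psi>] by simp
  also have "\<dots> = smul (rho0 X f * g) \<psi> + smul (f * rho0 X g) \<psi> + smul (f * g) (br X \<psi>)"
    using smul_add_right[OF smul_mem[OF \<psi>] smul_mem[OF X\<psi>]] smul_mult[OF \<psi>] smul_mult[OF X\<psi>]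
    by (simp add: add.assoc)
  finally have "smul (rho0 X (f * g)) \<psi> = smul (rho0 X f * g) \<psi> + smul (f * rho0 X g) \<psi>"
    by simp
  then show ?thesis using smul_diff_left[OF \<psi>] by simp
qed

lemma rho0_D_Leibniz:
  assumes W: "fgp_module smul W" and \<phi>: "\<phi> \<in> W"
  shows "rho0 (D \<phi>) (f * g) = f * rho0 (D \<phi>) g + rho0 (D \<phi>) f * g"
proof -
  define F where "F \<phi> = rho0 (D \<phi>) (f * g) - f * rho0 (D \<phi>) g - rho0 (D \<phi>) f * g" for \<phi>
  have "F \<phi> = 0"
  proof (rule fgp_module_annihilating_functional_zero[OF W _ _ _ \<phi>])
    show "F (x + y) = F x + F y" if "x \<in> W" "y \<in> W" for x y
      unfolding F_def using that D_add rho0_add D_mem_W by (simp add: algebra_simps)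
    show "F (smul h x) = h * F x" if "x \<in> W" for h x
      unfolding F_def using that rho0_D_smul by (simp add: algebra_simps)
    show "smul (F x) y = 0" if "x \<in> W" "y \<in> W" for x y
      unfolding F_def using that anchor_Leibniz_defect_annihilates D_mem_W by blast
  qed
  then show ?thesis unfolding F_def by (simp add: algebra_simps)
qed

lemma D_br_D: "\<psi> \<in> W \<Longrightarrow> \<phi> \<in> W \<Longrightarrow> D (br (D \<psi>) \<phi>) = br (D \<psi>) (D \<phi>)"
  using D_br[OF D_mem_W] D_D br_zero_left by (simp add: sgnx_def)

lemma br_D_Leibniz:
  assumes "\<psi> \<in> W" "\<phi>1 \<in> W" "\<phi>2 \<in> W"
  shows "br (D \<psi>) (br (D \<phi>1) \<phi>2) = br (D (br (D \<psi>) \<phi>1)) \<phi>2 + br (D \<phi>1) (br (D \<psi>) \<phi>2)"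
  using br_jacobi[OF D_mem_W[OF assms(1)] D_mem_W[OF assms(2)] assms(3)] D_br_D assms
  by (simp add: sgnx_def)

lemma D_br_self:
  assumes \<psi>: "\<psi> \<in> W"
  shows "D (br \<psi> \<psi>) = smul 2 (br (D \<psi>) \<psi>)"
proof -
  have skew: "br \<psi> (D \<psi>) = - br (D \<psi>) \<psi>"
    using br_skew[OF D_mem_W[OF \<psi>] \<psi>] by (simp add: sgnx_def)
  have "D (br \<psi> \<psi>) = br (D \<psi>) \<psi> + br (D \<psi>) \<psi>"
    using D_br[OF \<psi> \<psi>] skew by (simp add: sgnx_def)
  then show ?thesis using smul_two[OF br_mem_degree_preserving[OF D_mem_W[OF \<psi>] \<psi>]] by simp
qed

lemma br_D_self:
  assumes \<psi>: "\<psi> \<in> W"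
  shows "br (D \<psi>) \<psi> = smul (of_real (1/2)) (D (br \<psi> \<psi>))"
proof -
  have D\<psi>\<psi>: "br (D \<psi>) \<psi> \<in> W" using br_mem_degree_preserving[OF D_mem_W[OF \<psi>] \<psi>] .
  have "smul (of_real (1/2)) (D (br \<psi> \<psi>)) = smul (of_real (1/2) * 2) (br (D \<psi>) \<psi>)"
    using D_br_self[OF \<psi>] smul_mult[OF D\<psi>\<psi>] by simp
  then show ?thesis using of_real_half_times_two[where 'r = 'r] smul_one[OF D\<psi>\<psi>] by simp
qed

lemma br_D_pairing:
  assumes \<psi>: "\<psi> \<in> W" and \<phi>: "\<phi> \<in> W"
  shows "br (D \<psi>) (br \<phi> \<phi>) = smul 2 (br (br (D \<psi>) \<phi>) \<phi>)"
proof -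
  have D\<psi>\<phi>: "br (D \<psi>) \<phi> \<in> W" using br_mem_degree_preserving[OF D_mem_W[OF \<psi>] \<phi>] .
  have "br (D \<psi>) (br \<phi> \<phi>) = br (br (D \<psi>) \<phi>) \<phi> + br \<phi> (br (D \<psi>) \<phi>)"
    using br_jacobi[OF D_mem_W[OF \<psi>] \<phi> \<phi>] by (simp add: sgnx_def)
  also have "\<dots> = smul 2 (br (br (D \<psi>) \<phi>) \<phi>)"
    using br_W_sym[OF \<phi> D\<psi>\<phi>] smul_two[OF br_mem_W[OF D\<psi>\<phi> \<phi>]] by simp
  finally show ?thesis .
qed

lemma rho0_D_derivation: "fgp_module smul W \<Longrightarrow> \<phi> \<in> W \<Longrightarrow> is_derivation (rho0 (D \<phi>))"
  unfolding is_derivation_def using rho0_real_linear D_mem_W rho0_D_Leibniz by simp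

lemma vinogradov_algebroid_of_nondegenerate_pairing:
  assumes W: "fgp_module smul W" and V: "fgp_module smul V"
    and pairing: "R_bilinear_on smul W V br" "nondegenerate_pairing smul br W V" "surjective_pairing br W V"
  shows "vinogradov_algebroid smul W V (\<lambda>\<phi> \<psi>. br (D \<phi>) \<psi>) (\<lambda>\<phi> f. rho0 (D \<phi>) f) br D
    (\<lambda>\<phi> v. br (D \<phi>) v)"
proof -
  have bracket_W: "real_bilinear_on smul W W (\<lambda>\<phi> \<psi>. br (D \<phi>) \<psi>)"
    and bracket_V: "real_bilinear_on smul W V (\<lambda>\<phi> v. br (D \<phi>) v)"
    using real_bilinear_on_compose_left[OF D_real_linear D_mem_W br_real_bilinear] by blast+
  have bracket_mem: "\<forall>\<phi>\<in>W. \<forall>\<psi>\<in>W. br (D \<phi>) \<psi> \<in> W"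
    and rhoD_mem: "\<forall>\<phi>\<in>W. \<forall>v\<in>V. br (D \<phi>) v \<in> V"
    using br_mem_degree_preserving D_mem_W by blast+
  have anchor_add: "\<forall>\<phi>\<in>W. \<forall>\<psi>\<in>W. rho0 (D (\<phi> + \<psi>)) = (\<lambda>f. rho0 (D \<phi>) f + rho0 (D \<psi>) f)"
    using D_add rho0_add D_mem_W by simp
  have rhoD_linear: "\<forall>\<phi>\<in>W. real_linear_on smul V (\<lambda>v. br (D \<phi>) v)"
    and rhoD_add: "\<forall>\<phi>\<in>W. \<forall>\<phi>'\<in>W. \<forall>v\<in>V. br (D (\<phi> + \<phi>')) v = br (D \<phi>) v + br (D \<phi>') v"
    and rhoD_of_real: "\<forall>c::real. \<forall>\<phi>\<in>W. \<forall>v\<in>V.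
      br (D (smul (of_real c) \<phi>)) v = smul (of_real c) (br (D \<phi>) v)"
    using bracket_V unfolding real_bilinear_on_def real_linear_on_def by simp_all
  have rhoD_anchor: "\<forall>\<phi>\<in>W. \<forall>f. \<forall>v\<in>V. br (D \<phi>) (smul f v) = smul (rho0 (D \<phi>) f) v + smul f (br (D \<phi>) v)"
    using anchor D_mem_W by blast
  have derivations: "\<forall>\<phi>\<in>W. is_derivation (rho0 (D \<phi>))"
    using rho0_D_derivation[OF W] by blast
  have anchor_smul: "\<forall>g. \<forall>\<phi>\<in>W. rho0 (D (smul g \<phi>)) = (\<lambda>f. g * rho0 (D \<phi>) f)"
    using rho0_D_smul by blast
  have symmetric: "\<forall>\<phi>\<in>W. \<forall>\<psi>\<in>W. br \<phi> \<psi> = br \<psi> \<phi>"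
    using br_W_sym by blast
  have D_mem: "\<forall>v\<in>V. D v \<in> W"
    using D_mem_V by blast
  have Leibniz: "\<forall>\<psi>\<in>W. \<forall>\<phi>1\<in>W. \<forall>\<phi>2\<in>W.
      br (D \<psi>) (br (D \<phi>1) \<phi>2) = br (D (br (D \<psi>) \<phi>1)) \<phi>2 + br (D \<phi>1) (br (D \<psi>) \<phi>2)"
    using br_D_Leibniz by blast
  have self: "\<forall>\<psi>\<in>W. br (D \<psi>) \<psi> = smul (of_real (1/2)) (D (br \<psi> \<psi>))"
    using br_D_self by blast
  have invariance: "\<forall>\<psi>\<in>W. \<forall>\<phi>\<in>W. br (D \<psi>) (br \<phi> \<phi>) = smul 2 (br (br (D \<psi>) \<phi>) \<phi>)"
    using br_D_pairing by blast
  have D_Leibniz: "\<forall>f g. \<forall>v\<in>V. D (smul (f * g) v) + smul (f * g) (D v) = smul f (D (smul g v)) + smul g (D (smul f v))"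
    using D_smul_mult by blast
  show ?thesis
    unfolding vinogradov_algebroid_def
    using W V pairing bracket_W bracket_mem anchor_add rhoD_mem rhoD_linear rhoD_add rhoD_of_real
      rhoD_anchor derivations anchor_smul symmetric D_mem D_real_linear Leibniz self invariance D_Leibniz
    by (intro conjI) assumption+
qed

end

theorem proposition5p8:
  fixes smul :: "'r::{comm_ring_1,real_algebra_1} \<Rightarrow> 'a::ab_group_add \<Rightarrow> 'a"
    and A :: "int \<Rightarrow> 'a set" and d :: int and br :: "'a \<Rightarrow> 'a \<Rightarrow> 'a"
    and D :: "'a \<Rightarrow> 'a" and rho0 :: "'a \<Rightarrow> 'r \<Rightarrow> 'r"
  assumes "DGLA smul A d br D"
    and "strongly_anchored smul A d br D rho0"
    and "fgp_module smul (A (-d-1))"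
    and "fgp_module smul (A (-d-2))"
  shows "(R_bilinear_on smul (A (-d-1)) (A (-d-2)) br \<longleftrightarrow>
            (\<forall>f. \<forall>\<psi>\<in>A (-d-1). \<forall>\<phi>\<in>A (-d-1). br \<psi> (smul f \<phi>) = smul f (br \<psi> \<phi>))) \<and>
         (R_bilinear_on smul (A (-d-1)) (A (-d-2)) br \<and>
          nondegenerate_pairing smul br (A (-d-1)) (A (-d-2)) \<and>
          surjective_pairing br (A (-d-1)) (A (-d-2))
          \<longrightarrow> vinogradov_algebroid smul (A (-d-1)) (A (-d-2))
                (\<lambda>\<phi> \<psi>. br (D \<phi>) \<psi>) (\<lambda>\<phi> f. rho0 (D \<phi>) f) br D (\<lambda>\<phi> v. br (D \<phi>) v))"
proof -
  interpret strongly_anchored_DGLA smul A d br D rho0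
    using assms(1,2) by unfold_locales
  show ?thesis
    using R_bilinear_on_W_iff_right_linear vinogradov_algebroid_of_nondegenerate_pairing[OF assms(3,4)]
    by blast
qed

end
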